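(* Let $\mathcal{P}'$ be a set of pairwise edge-intersecting paths in a Helly $B_k$-EPG representation of a graph $G$. Then the intersection of all paths of $\mathcal{P}'$ contains at least one relevant edge (of some path of the representation).
   Context: A grid is the set of integer points of the plane; a grid edge joins two grid points at distance $1$. A path in the grid is a sequence of distinct grid edges in which consecutive edges share exactly one grid point and non-consecutive edges share none; a bend is a pair of consecutive edges with different directions (horizontal/vertical), these being bend edges. The first and last edges of a path are its extremity edges; relevant edges of a path are its extremity and bend edges. An EPG representation of $G$ is a family $(P_v)_{v\in V(G)}$ of grid paths such that distinct $u,v$ are adjacent iff $P_u,P_v$ share a grid edge; it is $B_k$-EPG if every path has at most $k$ bends, and Helly if every subfamily of pairwise edge-intersecting paths has a grid edge common to all its members. *)

theory Defs
  imports Main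
begin

type_synonym gpoint = "int \<times> int"
type_synonym gedge = "gpoint set"

definition grid_edge :: "gedge \<Rightarrow> bool" where
  "grid_edge e \<longleftrightarrow> (\<exists>p q. e = {p, q} \<and> \<bar>fst p - fst q\<bar> + \<bar>snd p - snd q\<bar> = 1)"

definition horizontal :: "gedge \<Rightarrow> bool" where
  "horizontal e \<longleftrightarrow> (\<exists>a b y. e = {(a, y), (b, y)} \<and> a \<noteq> b)"

definition grid_path :: "gedge list \<Rightarrow> bool" where
  "grid_path xs \<longleftrightarrow> xs \<noteq> [] \<and> distinct xs \<and> (\<forall>e\<in>set xs. grid_edge e) \<and>
     (\<forall>i. Suc i < length xs \<longrightarrow> card (xs ! i \<inter> xs ! Suc i) = 1) \<and>
     (\<forall>i j. Suc i < j \<and> j < length xs \<longrightarrow> xs ! i \<inter> xs ! j = {})"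

definition is_bend :: "gedge list \<Rightarrow> nat \<Rightarrow> bool" where
  "is_bend xs i \<longleftrightarrow> Suc i < length xs \<and> horizontal (xs ! i) \<noteq> horizontal (xs ! Suc i)"

definition num_bends :: "gedge list \<Rightarrow> nat" where
  "num_bends xs = card {i. is_bend xs i}"

definition bend_edge :: "gedge list \<Rightarrow> gedge \<Rightarrow> bool" where
  "bend_edge xs e \<longleftrightarrow> (\<exists>i. is_bend xs i \<and> (e = xs ! i \<or> e = xs ! Suc i))"

definition relevant_edge :: "gedge list \<Rightarrow> gedge \<Rightarrow> bool" where
  "relevant_edge xs e \<longleftrightarrow> e = hd xs \<or> e = last xs \<or> bend_edge xs e"

definition EPG_rep :: "'v set \<Rightarrow> ('v \<Rightarrow> 'v \<Rightarrow> bool) \<Rightarrow> ('v \<Rightarrow> gedge list) \<Rightarrow> bool" where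
  "EPG_rep V E P \<longleftrightarrow> (\<forall>v\<in>V. grid_path (P v)) \<and>
     (\<forall>u\<in>V. \<forall>v\<in>V. u \<noteq> v \<longrightarrow> (E u v \<longleftrightarrow> set (P u) \<inter> set (P v) \<noteq> {}))"

definition Bk_EPG_rep :: "nat \<Rightarrow> 'v set \<Rightarrow> ('v \<Rightarrow> 'v \<Rightarrow> bool) \<Rightarrow> ('v \<Rightarrow> gedge list) \<Rightarrow> bool" where
  "Bk_EPG_rep k V E P \<longleftrightarrow> EPG_rep V E P \<and> (\<forall>v\<in>V. num_bends (P v) \<le> k)"

definition pairwise_edge_intersecting :: "('v \<Rightarrow> gedge list) \<Rightarrow> 'v set \<Rightarrow> bool" where
  "pairwise_edge_intersecting P S \<longleftrightarrow> (\<forall>u\<in>S. \<forall>v\<in>S. set (P u) \<inter> set (P v) \<noteq> {})"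

definition Helly_rep :: "'v set \<Rightarrow> ('v \<Rightarrow> gedge list) \<Rightarrow> bool" where
  "Helly_rep V P \<longleftrightarrow> (\<forall>S\<subseteq>V. pairwise_edge_intersecting P S \<longrightarrow>
      (\<exists>e. grid_edge e \<and> (\<forall>v\<in>S. e \<in> set (P v))))"

end

theory Submission
  imports Defs "HOL-Library.Product_Plus"
begin

text \<open>By the Helly property the paths of the family share a grid edge e.
  At an edge that is not relevant for a path, that path continues straight on in both
  directions, so it also contains the next edge along the line of e. Walking from e along
  its line, all paths therefore keep containing the current edge until it is relevant for
  one of them, and since a single path is finite the walk must stop.\<close>

definition hor_edge :: "int \<Rightarrow> int \<Rightarrow> gedge" where
  "hor_edge x y = {(x, y), (x + 1, y)}"

definition ver_edge :: "int \<Rightarrow> int \<Rightarrow> gedge" where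
  "ver_edge x y = {(x, y), (x, y + 1)}"

definition shift_along :: "gedge \<Rightarrow> gedge" where
  "shift_along e = (+) (if horizontal e then (1, 0) else (0, 1)) ` e"

lemma grid_edge_cases:
  assumes "grid_edge e"
  obtains (hor) x y where "e = hor_edge x y" | (ver) x y where "e = ver_edge x y"
proof -
  obtain a b c d where e: "e = {(a, b), (c, d)}" and "\<bar>a - c\<bar> + \<bar>b - d\<bar> = 1"
    using assms unfolding grid_edge_def by force
  then consider "c = a + 1" "d = b" | "a = c + 1" "d = b" | "c = a" "d = b + 1" | "c = a" "b = d + 1"
    by linarith
  then show ?thesis
    using that unfolding e hor_edge_def ver_edge_def by cases (simp_all add: insert_commute)
qed

lemma horizontal_hor_edge [simp]: "horizontal (hor_edge x y)"
  unfolding horizontal_def hor_edge_def by (rule exI[of _ x], rule exI[of _ "x + 1"]) auto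

lemma not_horizontal_ver_edge [simp]: "\<not> horizontal (ver_edge x y)"
  unfolding horizontal_def ver_edge_def by (auto simp: doubleton_eq_iff)

lemma shift_along_hor_edge [simp]: "shift_along (hor_edge x y) = hor_edge (x + 1) y"
  by (simp add: shift_along_def) (simp add: hor_edge_def ac_simps)

lemma shift_along_ver_edge [simp]: "shift_along (ver_edge x y) = ver_edge x (y + 1)"
  by (simp add: shift_along_def) (simp add: ver_edge_def ac_simps)

lemma grid_edge_hor_edge [simp]: "grid_edge (hor_edge x y)"
  unfolding grid_edge_def hor_edge_def by force

lemma grid_edge_ver_edge [simp]: "grid_edge (ver_edge x y)"
  unfolding grid_edge_def ver_edge_def by force

lemma grid_edge_shift_along: "grid_edge e \<Longrightarrow> grid_edge (shift_along e)"
  by (elim grid_edge_cases) simp_all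

lemma shift_along_eqD:
  assumes "shift_along e = shift_along f" and "horizontal e = horizontal f"
  shows "e = f"
  using assms unfolding shift_along_def by (simp add: inj_image_eq_iff)

lemma card_inter_hor_edges:
  assumes "card (hor_edge x y \<inter> hor_edge x' y') = 1"
  shows "y' = y \<and> (x' = x + 1 \<or> x = x' + 1)"
proof (rule ccontr)
  assume "\<not> ?thesis"
  then have "hor_edge x y \<inter> hor_edge x' y' \<in> {{}, hor_edge x y}"
    unfolding hor_edge_def by auto
  with assms show False
    unfolding hor_edge_def by auto
qed

lemma card_inter_ver_edges:
  assumes "card (ver_edge x y \<inter> ver_edge x' y') = 1"
  shows "x' = x \<and> (y' = y + 1 \<or> y = y' + 1)"
proof (rule ccontr)
  assume "\<not> ?thesis"
  then have "ver_edge x y \<inter> ver_edge x' y' \<in> {{}, ver_edge x y}"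
    unfolding ver_edge_def by auto
  with assms show False
    unfolding ver_edge_def by auto
qed

lemma parallel_adjacent_grid_edges:
  assumes "grid_edge e" and "grid_edge f" and "horizontal f = horizontal e"
    and "card (e \<inter> f) = 1"
  shows "f = shift_along e \<or> e = shift_along f"
  using assms(1,2)
proof (cases rule: grid_edge_cases[case_product grid_edge_cases])
  case (hor_hor x y x' y')
  then show ?thesis using card_inter_hor_edges[of x y x' y'] assms(4) by auto
next
  case (ver_ver x y x' y')
  then show ?thesis using card_inter_ver_edges[of x y x' y'] assms(4) by auto
qed (use assms(3) in simp_all)

lemma not_relevant_edge_interior:
  assumes "Q \<noteq> []" and "e \<in> set Q" and "\<not> relevant_edge Q e"
  obtains j where "Q ! Suc j = e" and "Suc (Suc j) < length Q"
    and "\<not> is_bend Q j" and "\<not> is_bend Q (Suc j)"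
proof -
  obtain i where i: "i < length Q" "Q ! i = e"
    using assms(2) by (auto simp: in_set_conv_nth)
  have "i \<noteq> 0"
    using assms i by (auto simp: relevant_edge_def hd_conv_nth)
  then obtain j where j: "i = Suc j"
    using not0_implies_Suc by blast
  have "Suc i \<noteq> length Q"
  proof
    assume "Suc i = length Q"
    then have "e = last Q"
      using assms(1) i by (metis diff_Suc_1 last_conv_nth)
    with assms(3) show False
      by (simp add: relevant_edge_def)
  qed
  moreover have "\<not> is_bend Q j" "\<not> is_bend Q (Suc j)"
    using assms(3) i j unfolding relevant_edge_def bend_edge_def by blast+
  ultimately show ?thesis
    using that i j by simp
qed

lemma shift_along_mem_if_not_relevant:
  assumes Q: "grid_path Q" and e: "e \<in> set Q" and not_rel: "\<not> relevant_edge Q e"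
  shows "shift_along e \<in> set Q"
proof -
  have "Q \<noteq> []" "distinct Q" and edges: "\<forall>f\<in>set Q. grid_edge f"
    and meet: "\<forall>i. Suc i < length Q \<longrightarrow> card (Q ! i \<inter> Q ! Suc i) = 1"
    using Q unfolding grid_path_def by auto
  then obtain j where j: "Q ! Suc j = e" "Suc (Suc j) < length Q"
    and straight: "\<not> is_bend Q j" "\<not> is_bend Q (Suc j)"
    using e not_rel not_relevant_edge_interior by metis
  define a b where "a = Q ! j" and "b = Q ! Suc (Suc j)"
  have ab: "a \<in> set Q" "b \<in> set Q" "a \<noteq> b"
    using j \<open>distinct Q\<close> by (auto simp: a_def b_def nth_eq_iff_index_eq)
  have "a = shift_along e \<or> e = shift_along a"
  proof (rule parallel_adjacent_grid_edges)
    show "horizontal a = horizontal e" "card (e \<inter> a) = 1"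
      using straight(1) meet j unfolding a_def is_bend_def by (auto simp: Int_commute)
  qed (use ab edges e in auto)
  moreover have "b = shift_along e \<or> e = shift_along b"
  proof (rule parallel_adjacent_grid_edges)
    show "horizontal b = horizontal e" "card (e \<inter> b) = 1"
      using straight(2) meet j unfolding b_def is_bend_def by auto
  qed (use ab edges e in auto)
  \<comment> \<open>The neighbours a and b cannot both be the edge preceding e on its line.\<close>
  moreover have "horizontal a = horizontal b"
    using straight j unfolding a_def b_def is_bend_def by auto
  ultimately show ?thesis
    using ab shift_along_eqD by metis
qed

lemma inj_shift_along_iterates:
  assumes "grid_edge e"
  shows "inj (\<lambda>n. (shift_along ^^ n) e)"
proof -
  define level :: "gedge \<Rightarrow> int" where "level f = (\<Sum>p\<in>f. fst p + snd p)" for f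
  have level_shift: "level (shift_along f) = level f + 2" if "grid_edge f" for f
    using that by (elim grid_edge_cases) (simp_all add: level_def, simp_all add: hor_edge_def ver_edge_def)
  have "grid_edge ((shift_along ^^ n) e) \<and> level ((shift_along ^^ n) e) = level e + 2 * int n" for n
    by (induction n) (simp_all add: assms grid_edge_shift_along level_shift)
  then have "inj (level \<circ> (\<lambda>n. (shift_along ^^ n) e))"
    by (auto intro: injI)
  then show ?thesis
    by (rule inj_on_imageI2)
qed

lemma inj_walk_reaches_stop:
  fixes F :: "nat \<Rightarrow> 'a" and A :: "'i \<Rightarrow> 'a set"
  assumes "inj F" and "i0 \<in> I" and "finite (A i0)" and "\<forall>i\<in>I. F 0 \<in> A i"
    and "\<And>i n. i \<in> I \<Longrightarrow> F n \<in> A i \<Longrightarrow> \<not> R i (F n) \<Longrightarrow> F (Suc n) \<in> A i"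
  shows "\<exists>n. (\<forall>i\<in>I. F n \<in> A i) \<and> (\<exists>i\<in>I. R i (F n))"
proof (rule ccontr)
  assume no_stop: "\<not> ?thesis"
  have "\<forall>i\<in>I. F n \<in> A i" for n
    by (induction n) (use assms(4,5) no_stop in blast)+
  then have "range F \<subseteq> A i0"
    using assms(2) by auto
  then have "finite (range F)"
    using assms(3) finite_subset by blast
  with assms(1) show False
    using finite_imageD by blast
qed

theorem corollary3p1:
  fixes V :: "'v set" and E :: "'v \<Rightarrow> 'v \<Rightarrow> bool" and P :: "'v \<Rightarrow> gedge list" and k :: nat
    and S :: "'v set"
  assumes "finite V"
    and "Bk_EPG_rep k V E P"
    and "Helly_rep V P"
    and "S \<subseteq> V" and "S \<noteq> {}"
    and "pairwise_edge_intersecting P S"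
  shows "\<exists>e. (\<forall>v\<in>S. e \<in> set (P v)) \<and> (\<exists>w\<in>V. relevant_edge (P w) e)"
proof -
  obtain e where e: "grid_edge e" and common: "\<forall>v\<in>S. e \<in> set (P v)"
    using assms(3,4,6) unfolding Helly_rep_def by blast
  obtain v0 where "v0 \<in> S"
    using assms(5) by blast
  have paths: "\<And>v. v \<in> S \<Longrightarrow> grid_path (P v)"
    using assms(2,4) unfolding Bk_EPG_rep_def EPG_rep_def by blast
  have "\<exists>n. (\<forall>v\<in>S. (shift_along ^^ n) e \<in> set (P v)) \<and>
      (\<exists>v\<in>S. relevant_edge (P v) ((shift_along ^^ n) e))"
  proof (rule inj_walk_reaches_stop[OF inj_shift_along_iterates[OF e] \<open>v0 \<in> S\<close>])
    show "\<And>v n. v \<in> S \<Longrightarrow> (shift_along ^^ n) e \<in> set (P v) \<Longrightarrow>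
        \<not> relevant_edge (P v) ((shift_along ^^ n) e) \<Longrightarrow> (shift_along ^^ Suc n) e \<in> set (P v)"
      using paths shift_along_mem_if_not_relevant by simp
  qed (use common in simp_all)
  then show ?thesis
    using assms(4) by blast
qed

end
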